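(* Let $n\ge 1$ and let $C_n$ be an $n$-crossing, i.e. a chord diagram consisting of $n$ pairwise crossing chords. Then $ex(C_n)$ equals the number of $0$-$1$ Young diagrams $M$ of shape $(n,n-1,\dots,1)$ such that (1) every column of $M$ contains at most one $1$, and (2) every row of $M$ contains an even number of $1$'s.
   Context: A chord diagram is a set of chords of a circle no two sharing an endpoint; a crossing is a pair of chords intersecting in the interior; a diagram is nonintersecting if it has no crossing. For a crossing $S=\{ac,bd\}$ of $E$ with $a,b,c,d$ in cyclic order, the chord expansion replaces $E$ by $(E\setminus S)\cup\{ab,cd\}$ and $(E\setminus S)\cup\{da,bc\}$. Iterating until no crossings remain yields a multiset of nonintersecting diagrams independent of the choices made; its cardinality (with multiplicity) is the chord expansion number $ex(E)$. A $0$-$1$ Young diagram of shape $(a_1,\dots,a_m)$ is a Young diagram with left-justified rows of lengths $a_1,\dots,a_m$ in which each box holds $0$ or $1$. *)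

theory Defs
  imports "HOL-Library.FuncSet"
begin

text \<open>Endpoints on the circle are labelled by natural numbers; the cyclic order of
  the points on the circle is the cyclic order induced by the usual order on nat.\<close>

type_synonym chord = "nat set"

definition chord_diagram :: "chord set \<Rightarrow> bool" where
  "chord_diagram E \<longleftrightarrow> finite E \<and> (\<forall>c\<in>E. card c = 2) \<and>
     (\<forall>c\<in>E. \<forall>c'\<in>E. c \<noteq> c' \<longrightarrow> c \<inter> c' = {})"

definition crosses :: "chord \<Rightarrow> chord \<Rightarrow> bool" where
  "crosses x y \<longleftrightarrow> (\<exists>a b c d. a < b \<and> b < c \<and> c < d \<and>
      ((x = {a, c} \<and> y = {b, d}) \<or> (x = {b, d} \<and> y = {a, c})))"

definition nonintersecting :: "chord set \<Rightarrow> bool" where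
  "nonintersecting E \<longleftrightarrow> (\<forall>x\<in>E. \<forall>y\<in>E. \<not> crosses x y)"

text \<open>expands E k: some complete iteration of chord expansions starting from E
  produces a multiset of k nonintersecting diagrams.\<close>
inductive expands :: "chord set \<Rightarrow> nat \<Rightarrow> bool" where
  finished: "nonintersecting E \<Longrightarrow> expands E 1"
| expand: "\<lbrakk> {a, c} \<in> E; {b, d} \<in> E; a < b; b < c; c < d;
           expands ((E - {{a, c}, {b, d}}) \<union> {{a, b}, {c, d}}) k1;
           expands ((E - {{a, c}, {b, d}}) \<union> {{d, a}, {b, c}}) k2 \<rbrakk>
         \<Longrightarrow> expands E (k1 + k2)"

text \<open>Chord expansion number (the count is independent of the choices made).\<close>
definition ex :: "chord set \<Rightarrow> nat" where
  "ex E = (THE k. expands E k)"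

definition n_crossing :: "nat \<Rightarrow> chord set \<Rightarrow> bool" where
  "n_crossing n E \<longleftrightarrow> chord_diagram E \<and> card E = n \<and>
     (\<forall>x\<in>E. \<forall>y\<in>E. x \<noteq> y \<longrightarrow> crosses x y)"

definition staircase :: "nat \<Rightarrow> (nat \<times> nat) set" where
  "staircase n = {(i, j). i < n \<and> j < n - i}"

definition zero_one_fillings :: "nat \<Rightarrow> (nat \<times> nat \<Rightarrow> nat) set" where
  "zero_one_fillings n = staircase n \<rightarrow>\<^sub>E {0, 1}"

definition good_filling :: "nat \<Rightarrow> (nat \<times> nat \<Rightarrow> nat) \<Rightarrow> bool" where
  "good_filling n M \<longleftrightarrow>
     (\<forall>j. (\<Sum>i\<in>{i. (i, j) \<in> staircase n}. M (i, j)) \<le> 1) \<and>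
     (\<forall>i<n. even (\<Sum>j<n - i. M (i, j)))"

end

(*
  For a weight alpha :: nat => int and a chord diagram E with endpoint set P, consider
    Phi_alpha(E) = sum over X <= P of (prod_c sgn_c(X)) * prod over y in P - X of (h_X(y) + alpha(y)),
  where sgn_c(X) is 1 or -1 if X contains exactly the left or exactly the right endpoint of c
  (and 0 otherwise), and h_X(y) counts the points of X minus the points of P - X to the left of y.
  The local identity sgn_ac sgn_bd = sgn_ab sgn_cd + sgn_da sgn_bc makes Phi_alpha additive under
  chord expansion, and adding a chord pq with no endpoint between p and q multiplies it by
  1 + alpha(q) - alpha(p).  So Phi_0 is 1 on nonintersecting diagrams, and ex E = Phi_0(E)
  (expansion terminates because it lowers the number of crossings).

  Write Phi_z for Phi_alpha with the step weight alpha(y) = (z - 1) [v <= y].  If u < v and u lies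
  left of all endpoints of D, then 2 Phi_z(D + uv) = (z + 1) Phi_(z+1)(D) + (z - 1) Phi_(z-1)(D):
  both sides respect expansion inside D, and for nonintersecting D both are evaluated by peeling
  off innermost chords.
  Removing the leftmost chord of an n-crossing C_n therefore shows that Q_n(z) = Phi_z(C_n)
  satisfies 2 Q_(n+1)(z) = (z+1) Q_n(z+1) + (z-1) Q_n(z-1).
  The sum of z^(number of empty columns) over the admissible 0-1 fillings obeys the same recursion
  (the top row may put its even number of 1s only into empty columns or the new last column), and
  z = 1 turns both sides into the counts.
*)

theory Submission
  imports Defs
begin

definition points :: "chord set \<Rightarrow> nat set" where
  "points E = \<Union>E"

lemma points_empty [simp]: "points {} = {}"
  unfolding points_def by simp

lemma points_insert [simp]: "points (insert c E) = c \<union> points E"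
  unfolding points_def by auto

lemma in_points: "c \<in> E \<Longrightarrow> y \<in> c \<Longrightarrow> y \<in> points E"
  unfolding points_def by auto

lemma chord_diagram_finite: "chord_diagram E \<Longrightarrow> finite E"
  unfolding chord_diagram_def by simp

lemma chord_diagram_finite_points: "chord_diagram E \<Longrightarrow> finite (points E)"
  unfolding chord_diagram_def points_def by (metis card.infinite finite_Union zero_neq_numeral)

lemma chord_diagram_chordE:
  assumes "chord_diagram E" "c \<in> E"
  obtains a b where "a < b" "c = {a, b}"
  using assms unfolding chord_diagram_def by (metis card_2_iff insert_commute linorder_neqE_nat)

lemma Min_Max_pair [simp]: "a < b \<Longrightarrow> Min {a, b} = a \<and> Max {a, b} = (b::nat)"
  by auto

lemma chord_diagram_Min_Max:
  assumes "chord_diagram E" "c \<in> E"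
  shows "c = {Min c, Max c}" "Min c < Max c"
  by (metis chord_diagram_chordE[OF assms] Min_Max_pair)+

lemma Max_in_points: "chord_diagram E \<Longrightarrow> c \<in> E \<Longrightarrow> Max c \<in> points E"
  by (metis chord_diagram_chordE Min_Max_pair in_points insertI1 insert_commute)

lemma chord_diagram_pointE:
  assumes "chord_diagram E" "y \<in> points E"
  obtains c where "c \<in> E" "y = Min c \<or> y = Max c"
proof -
  obtain c where "c \<in> E" "y \<in> c"
    using assms(2) by (auto simp: points_def)
  then show thesis
    using that chord_diagram_Min_Max(1)[OF assms(1)] by blast
qed

lemma chord_diagram_disjoint:
  "chord_diagram E \<Longrightarrow> c \<in> E \<Longrightarrow> c' \<in> E \<Longrightarrow> c \<noteq> c' \<Longrightarrow> c \<inter> c' = {}"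
  unfolding chord_diagram_def by blast

lemma chord_diagram_subset: "chord_diagram E \<Longrightarrow> E' \<subseteq> E \<Longrightarrow> chord_diagram E'"
  unfolding chord_diagram_def by (meson finite_subset subset_iff)

lemma chord_diagram_insert:
  "chord_diagram E \<Longrightarrow> a < b \<Longrightarrow> a \<notin> points E \<Longrightarrow> b \<notin> points E \<Longrightarrow>
    chord_diagram (insert {a, b} E)"
  unfolding chord_diagram_def points_def by auto

lemma nonintersecting_subset: "nonintersecting E \<Longrightarrow> E' \<subseteq> E \<Longrightarrow> nonintersecting E'"
  unfolding nonintersecting_def by blast

lemma crosses_pair_iff:
  assumes "a < b" "c < d"
  shows "crosses {a, b} {c, d} \<longleftrightarrow> a < c \<and> c < b \<and> b < d \<or> c < a \<and> a < d \<and> d < b"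
proof
  assume "crosses {a, b} {c, d}"
  then obtain a' b' c' d' where "a' < b'" "b' < c'" "c' < d'"
    "{a, b} = {a', c'} \<and> {c, d} = {b', d'} \<or> {a, b} = {b', d'} \<and> {c, d} = {a', c'}"
    unfolding crosses_def by blast
  then show "a < c \<and> c < b \<and> b < d \<or> c < a \<and> a < d \<and> d < b"
    using assms by (auto simp: doubleton_eq_iff)
next
  assume "a < c \<and> c < b \<and> b < d \<or> c < a \<and> a < d \<and> d < b"
  then show "crosses {a, b} {c, d}"
    unfolding crosses_def by blast
qed

lemma crosses_sym: "crosses x y \<longleftrightarrow> crosses y x"
  unfolding crosses_def by blast

lemma crosses_irrefl: "\<not> crosses x x"
  unfolding crosses_def by (auto simp: doubleton_eq_iff)

lemma nonintersecting_innermost_chord: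
  assumes cd: "chord_diagram E" and nc: "nonintersecting E" and "c0 \<in> E"
  obtains p q where "{p, q} \<in> E" "p < q" "Min c0 \<le> p" "q \<le> Max c0"
    "\<forall>y\<in>points (E - {{p, q}}). y < p \<or> q < y"
proof -
  let ?inside = "\<lambda>c. c \<in> E \<and> Min c0 \<le> Min c \<and> Max c \<le> Max c0"
  obtain c where c: "?inside c"
    and c_min: "\<And>c'. ?inside c' \<Longrightarrow> Max c - Min c \<le> Max c' - Min c'"
    using ex_has_least_nat[of ?inside c0 "\<lambda>c. Max c - Min c"] \<open>c0 \<in> E\<close> by auto
  obtain p q where pq: "p < q" "c = {p, q}"
    using chord_diagram_chordE[OF cd] c by blast
  have "y < p \<or> q < y" if "y \<in> points (E - {c})" for y
  proof (rule ccontr)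
    assume y: "\<not> (y < p \<or> q < y)"
    from that obtain c' where c': "c' \<in> E" "c' \<noteq> c" "y \<in> c'"
      unfolding points_def by auto
    obtain r s where rs: "r < s" "c' = {r, s}"
      using chord_diagram_chordE[OF cd c'(1)] by blast
    have "r \<notin> {p, q}" "s \<notin> {p, q}"
      using chord_diagram_disjoint[OF cd c'(1)] c c'(2) pq rs by auto
    moreover have "\<not> crosses {p, q} {r, s}" "\<not> crosses {r, s} {p, q}"
      using nc c c' pq rs unfolding nonintersecting_def by auto
    ultimately have "p < r" "s < q"
      using y c'(3) rs pq by (auto simp: crosses_pair_iff)
    then have "?inside c'" "s - r < q - p"
      using c c' pq rs by auto
    then show False
      using c_min[of c'] pq rs by simp
  qed
  then show thesis
    using that pq c by auto
qed

lemma nonintersecting_common_point_innermost: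
  assumes cd: "chord_diagram D" and nc: "nonintersecting D" and "D \<noteq> {}"
    and around: "\<forall>c\<in>D. Min c < v \<and> v < Max c"
  obtains p q where "{p, q} \<in> D" "p < v" "v < q" "\<forall>c\<in>D - {{p, q}}. Min c < p \<and> q < Max c"
proof -
  have "finite D"
    using cd by (rule chord_diagram_finite)
  then have "Max (Min ` D) \<in> Min ` D"
    using \<open>D \<noteq> {}\<close> by (intro Max_in) auto
  then obtain c1 where c1_max: "Max (Min ` D) = Min c1" and "c1 \<in> D"
    by (rule imageE)
  have "Min c \<le> Min c1" if "c \<in> D" for c
    using Max_ge[of "Min ` D" "Min c"] \<open>finite D\<close> that c1_max by simp
  with \<open>c1 \<in> D\<close> have c1: "c1 \<in> D" "\<forall>c\<in>D. Min c \<le> Min c1"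
    by blast+
  obtain p q where pq: "p < q" "c1 = {p, q}"
    using chord_diagram_chordE[OF cd c1(1)] by blast
  have "p < v" "v < q"
    using around c1(1) pq by auto
  have "Min c < p \<and> q < Max c" if c: "c \<in> D" "c \<noteq> {p, q}" for c
  proof -
    obtain r s where rs: "r < s" "c = {r, s}"
      using chord_diagram_chordE[OF cd c(1)] by blast
    have "c \<inter> {p, q} = {}"
      using chord_diagram_disjoint[OF cd c(1) c1(1)] c(2) pq(2) by simp
    then have "r \<noteq> p" "s \<noteq> q"
      using rs(2) by auto
    moreover have "r \<le> p" "v < s"
      using c1(2) around c(1) rs pq by auto
    moreover have "\<not> crosses c c1"
      using nc c(1) c1(1) unfolding nonintersecting_def by blast
    then have "\<not> crosses {r, s} {p, q}"
      using rs(2) pq(2) by simp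
    ultimately show ?thesis
      using rs \<open>p < v\<close> pq(1) by (auto simp: crosses_pair_iff)
  qed
  then show thesis
    using that \<open>p < v\<close> \<open>v < q\<close> c1(1) pq(2) by blast
qed

definition chord_sign :: "chord \<Rightarrow> nat set \<Rightarrow> int" where
  "chord_sign c X =
     (if Min c \<in> X \<and> Max c \<notin> X then 1 else if Max c \<in> X \<and> Min c \<notin> X then -1 else 0)"

definition height :: "nat set \<Rightarrow> nat set \<Rightarrow> nat \<Rightarrow> int" where
  "height P X y = int (card {p \<in> X. p < y}) - int (card {p \<in> P - X. p < y})"

definition weight :: "(nat \<Rightarrow> int) \<Rightarrow> nat set \<Rightarrow> nat set \<Rightarrow> int" where
  "weight \<alpha> P X = (\<Prod>y\<in>P - X. height P X y + \<alpha> y)"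

definition expansion_invariant :: "(nat \<Rightarrow> int) \<Rightarrow> chord set \<Rightarrow> int" where
  "expansion_invariant \<alpha> E =
     (\<Sum>X\<in>Pow (points E). (\<Prod>c\<in>E. chord_sign c X) * weight \<alpha> (points E) X)"

lemma chord_sign_pair:
  "a < b \<Longrightarrow> chord_sign {a, b} X =
     (if a \<in> X \<and> b \<notin> X then 1 else if b \<in> X \<and> a \<notin> X then -1 else 0)"
  by (simp add: chord_sign_def)

lemma chord_sign_resolution:
  assumes "a < b" "b < c" "c < d"
  shows "chord_sign {a, c} X * chord_sign {b, d} X =
    chord_sign {a, b} X * chord_sign {c, d} X + chord_sign {d, a} X * chord_sign {b, c} X"
  using assms by (simp add: chord_sign_pair insert_commute[of d a])

lemma chord_sign_insert_other:
  assumes "finite c" "c \<noteq> {}" "p \<notin> c"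
  shows "chord_sign c (insert p X) = chord_sign c X"
proof -
  have "Min c \<noteq> p" "Max c \<noteq> p"
    using assms Min_in Max_in by metis+
  then show ?thesis
    unfolding chord_sign_def by simp
qed

lemma expansion_invariant_empty [simp]: "expansion_invariant \<alpha> {} = 1"
  unfolding expansion_invariant_def weight_def by simp

lemma expansion_invariant_cong:
  "(\<And>y. y \<in> points E \<Longrightarrow> \<alpha> y = \<beta> y) \<Longrightarrow> expansion_invariant \<alpha> E = expansion_invariant \<beta> E"
  unfolding expansion_invariant_def weight_def by (intro sum.cong prod.cong refl) auto

lemma expansion_invariant_expand:
  assumes cd: "chord_diagram E" and chords: "{a, c} \<in> E" "{b, d} \<in> E"
    and order: "a < b" "b < c" "c < d"
  shows "expansion_invariant \<alpha> E =
    expansion_invariant \<alpha> ((E - {{a, c}, {b, d}}) \<union> {{a, b}, {c, d}}) +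
    expansion_invariant \<alpha> ((E - {{a, c}, {b, d}}) \<union> {{d, a}, {b, c}})"
proof -
  define R where "R = E - {{a, c}, {b, d}}"
  have "finite R"
    using chord_diagram_finite[OF cd] by (simp add: R_def)
  have "c' \<inter> {a, c} = {}" "c' \<inter> {b, d} = {}" if "c' \<in> R" for c'
    using that chord_diagram_disjoint[OF cd] chords unfolding R_def by blast+
  then have not_in_R: "{a, b} \<notin> R" "{c, d} \<notin> R" "{d, a} \<notin> R" "{b, c} \<notin> R" "{a, c} \<notin> R" "{b, d} \<notin> R"
    by blast+
  have distinct: "{a, c} \<noteq> {b, d}" "{a, b} \<noteq> {c, d}" "{d, a} \<noteq> {b, c}"
    using order by (auto simp: doubleton_eq_iff)
  have E: "E = insert {a, c} (insert {b, d} R)"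
    using chords R_def by auto
  have points_E: "points E = {a, b, c, d} \<union> points R"
    unfolding E by auto
  let ?sign = "\<lambda>E X. \<Prod>c'\<in>E. chord_sign c' X"
  have "?sign E X = ?sign {{a, b}, {c, d}} X * ?sign R X + ?sign {{d, a}, {b, c}} X * ?sign R X"
    for X
    unfolding E using \<open>finite R\<close> not_in_R distinct
    by (simp add: chord_sign_resolution[OF order] algebra_simps)
  moreover have "?sign (R \<union> {{a, b}, {c, d}}) X = ?sign {{a, b}, {c, d}} X * ?sign R X"
    "?sign (R \<union> {{d, a}, {b, c}}) X = ?sign {{d, a}, {b, c}} X * ?sign R X" for X
    using \<open>finite R\<close> not_in_R distinct by (simp_all add: Un_commute)
  moreover have "points (R \<union> {{a, b}, {c, d}}) = points E" "points (R \<union> {{d, a}, {b, c}}) = points E"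
    unfolding points_E by (auto simp: points_def)
  ultimately show ?thesis
    unfolding expansion_invariant_def R_def[symmetric]
    by (simp add: sum.distrib[symmetric] algebra_simps)
qed

lemma sum_Pow_insert:
  assumes "finite A" "x \<notin> A"
  shows "(\<Sum>X\<in>Pow (insert x A). g X) = (\<Sum>X\<in>Pow A. g X + g (insert x X))"
proof -
  have "(\<Sum>X\<in>Pow (insert x A). g X) = (\<Sum>X\<in>Pow A. g X) + (\<Sum>X\<in>insert x ` Pow A. g X)"
    unfolding Pow_insert by (rule sum.union_disjoint) (use assms in auto)
  also have "(\<Sum>X\<in>insert x ` Pow A. g X) = (\<Sum>X\<in>Pow A. g (insert x X))"
    by (subst sum.reindex) (use assms in \<open>auto intro!: inj_onI simp: o_def\<close>)
  finally show ?thesis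
    by (simp add: sum.distrib)
qed

lemma height_insert2:
  assumes "finite P" "p \<notin> P" "q \<notin> P" "p \<noteq> q" "X \<subseteq> P"
  shows "height (insert p (insert q P)) (insert p X) y = height P X y + of_bool (p < y) - of_bool (q < y)"
proof -
  have "finite X" "p \<notin> X"
    using assms finite_subset by blast+
  have "{x \<in> insert p X. x < y} = (if p < y then insert p {x \<in> X. x < y} else {x \<in> X. x < y})"
    "{x \<in> insert q (P - X). x < y} = (if q < y then insert q {x \<in> P - X. x < y} else {x \<in> P - X. x < y})"
    by auto
  moreover have "insert p (insert q P) - insert p X = insert q (P - X)"
    using assms by auto
  ultimately show ?thesis
    unfolding height_def using assms \<open>finite X\<close> \<open>p \<notin> X\<close> by auto
qed

text \<open>Inserting both endpoints of a short chord changes no height on the remaining points.\<close>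
lemma weight_insert2:
  assumes "finite P" "p \<notin> P" "q \<notin> P" "p \<noteq> q" "X \<subseteq> P"
    and same_side: "\<forall>y\<in>P. p < y \<longleftrightarrow> q < y"
  shows "weight \<alpha> (insert p (insert q P)) (insert p X) =
    (height P X q + of_bool (p < q) + \<alpha> q) * weight \<alpha> P X"
proof -
  have "insert p (insert q P) - insert p X = insert q (P - X)"
    using assms by auto
  moreover have "height (insert p (insert q P)) (insert p X) y = height P X y" if "y \<in> P" for y
    using height_insert2[OF assms(1-5)] same_side that by simp
  then have "(\<Prod>y\<in>P - X. height (insert p (insert q P)) (insert p X) y + \<alpha> y) = weight \<alpha> P X"
    unfolding weight_def by simp
  ultimately show ?thesis
    unfolding weight_def using assms height_insert2[OF assms(1-5), of q] by simp
qed

lemma expansion_invariant_insert_short_chord: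
  assumes cd: "chord_diagram E" and "p < q" and outside: "\<forall>y\<in>points E. y < p \<or> q < y"
  shows "expansion_invariant \<alpha> (insert {p, q} E) = (1 + \<alpha> q - \<alpha> p) * expansion_invariant \<alpha> E"
proof -
  define P where "P = points E"
  have "finite P" "finite E"
    using chord_diagram_finite_points[OF cd] chord_diagram_finite[OF cd] by (simp_all add: P_def)
  have pq: "p \<notin> P" "q \<notin> P" "p \<noteq> q"
    using outside \<open>p < q\<close> by (auto simp: P_def)
  have "{p, q} \<notin> E"
    using pq(1) in_points unfolding P_def by blast
  have sides: "p < y \<longleftrightarrow> q < y" "y < p \<longleftrightarrow> y < q" if "y \<in> P" for y
    using outside that \<open>p < q\<close> unfolding P_def by auto
  have "height P X p = height P X q" if "X \<subseteq> P" for X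
  proof -
    have "{x \<in> X. x < p} = {x \<in> X. x < q}" "{x \<in> P - X. x < p} = {x \<in> P - X. x < q}"
      using sides that by blast+
    then show ?thesis
      unfolding height_def by simp
  qed
  then have weights: "weight \<alpha> (insert p (insert q P)) (insert p X) -
      weight \<alpha> (insert p (insert q P)) (insert q X) = (1 + \<alpha> q - \<alpha> p) * weight \<alpha> P X"
    if "X \<subseteq> P" for X
    using weight_insert2[of P p q X \<alpha>] weight_insert2[of P q p X \<alpha>] \<open>finite P\<close> pq that sides
      \<open>p < q\<close> by (simp add: insert_commute algebra_simps)
  have unaffected: "chord_sign c (insert p X) = chord_sign c X" "chord_sign c (insert q X) = chord_sign c X"
    if "c \<in> E" for c X
    using that pq(1,2) chord_diagram_Min_Max[OF cd that] in_points[OF that] unfolding P_def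
    by (metis chord_sign_insert_other finite.emptyI finite.insertI insert_not_empty)+
  have "expansion_invariant \<alpha> (insert {p, q} E) = (\<Sum>X\<in>Pow (insert p (insert q P)).
      chord_sign {p, q} X * (\<Prod>c\<in>E. chord_sign c X) * weight \<alpha> (insert p (insert q P)) X)"
    unfolding expansion_invariant_def P_def using \<open>finite E\<close> \<open>{p, q} \<notin> E\<close>
    by (simp add: mult.assoc)
  also have "\<dots> = (\<Sum>X\<in>Pow P. (\<Prod>c\<in>E. chord_sign c X) *
      (weight \<alpha> (insert p (insert q P)) (insert p X) - weight \<alpha> (insert p (insert q P)) (insert q X)))"
  proof -
    have "p \<notin> insert q P"
      using pq by simp
    moreover have "chord_sign {p, q} X = 0" "chord_sign {p, q} (insert p (insert q X)) = 0"
      "chord_sign {p, q} (insert p X) = 1" "chord_sign {p, q} (insert q X) = -1"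
      if "X \<subseteq> P" for X
      using that pq \<open>p < q\<close> by (auto simp: chord_sign_pair)
    ultimately show ?thesis
      using \<open>finite P\<close> pq
      by (simp add: sum_Pow_insert) (intro sum.cong refl, simp add: unaffected algebra_simps)
  qed
  also have "\<dots> = (1 + \<alpha> q - \<alpha> p) * expansion_invariant \<alpha> E"
    unfolding expansion_invariant_def P_def[symmetric] sum_distrib_left
    by (intro sum.cong) (simp_all add: weights)
  finally show ?thesis .
qed

lemma expansion_invariant_nonintersecting:
  assumes "chord_diagram E" "nonintersecting E"
  shows "expansion_invariant \<alpha> E = (\<Prod>c\<in>E. 1 + \<alpha> (Max c) - \<alpha> (Min c))"
  using assms
proof (induction "card E" arbitrary: E rule: less_induct)
  case less
  show ?case
  proof (cases "E = {}")
    case False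
    then obtain c0 where "c0 \<in> E" by auto
    with less.prems obtain p q where pq: "{p, q} \<in> E" "p < q"
      and outside: "\<forall>y\<in>points (E - {{p, q}}). y < p \<or> q < y"
      by (rule nonintersecting_innermost_chord)
    define E' where "E' = E - {{p, q}}"
    have E: "E = insert {p, q} E'" "{p, q} \<notin> E'" and "finite E'"
      using pq chord_diagram_finite[OF less.prems(1)] by (auto simp: E'_def)
    have cd': "chord_diagram E'" and nc': "nonintersecting E'"
      using less.prems chord_diagram_subset nonintersecting_subset by (auto simp: E'_def)
    have "\<forall>y\<in>points E'. y < p \<or> q < y"
      using outside by (simp add: E'_def)
    then have "expansion_invariant \<alpha> E = (1 + \<alpha> q - \<alpha> p) * expansion_invariant \<alpha> E'"
      unfolding E(1) by (rule expansion_invariant_insert_short_chord[OF cd' pq(2)])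
    also have "expansion_invariant \<alpha> E' = (\<Prod>c\<in>E'. 1 + \<alpha> (Max c) - \<alpha> (Min c))"
      using less.hyps[OF _ cd' nc'] \<open>finite E'\<close> by (simp add: E)
    finally show ?thesis
      using E \<open>finite E'\<close> pq(2) by simp
  qed simp
qed

lemma crosses_pair_iff_separates:
  assumes "a < b" "s < t" "s \<notin> {a, b}" "t \<notin> {a, b}"
  shows "crosses {a, b} {s, t} \<longleftrightarrow> (s < a \<and> a < t) \<noteq> (s < b \<and> b < t)"
  using assms by (auto simp: crosses_pair_iff)

lemma of_bool_neq_interval_le:
  fixes P Q R S :: bool
  shows "(P \<longrightarrow> R \<longrightarrow> Q) \<Longrightarrow> (Q \<longrightarrow> S \<longrightarrow> R) \<Longrightarrow>
    of_bool (P \<noteq> Q) + of_bool (R \<noteq> S) \<le> of_bool (P \<noteq> R) + (of_bool (Q \<noteq> S) :: nat) \<and>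
    of_bool (P \<noteq> S) + of_bool (Q \<noteq> R) \<le> of_bool (P \<noteq> R) + (of_bool (Q \<noteq> S) :: nat)"
  by (cases P; cases Q; cases R; cases S) simp_all

lemma crossings_of_resolution_le:
  assumes order: "a < b" "b < c" "c < d" and "s < t" "s \<notin> {a, b, c, d}" "t \<notin> {a, b, c, d}"
  shows "of_bool (crosses {a, b} {s, t}) + of_bool (crosses {c, d} {s, t})
      \<le> of_bool (crosses {a, c} {s, t}) + (of_bool (crosses {b, d} {s, t}) :: nat)"
    "of_bool (crosses {d, a} {s, t}) + of_bool (crosses {b, c} {s, t})
      \<le> of_bool (crosses {a, c} {s, t}) + (of_bool (crosses {b, d} {s, t}) :: nat)"
proof -
  define I where "I x \<longleftrightarrow> s < x \<and> x < t" for x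
  have separates: "crosses {x, y} {s, t} \<longleftrightarrow> I x \<noteq> I y"
    if "x \<in> {a, b, c, d}" "y \<in> {a, b, c, d}" "x < y" for x y
    unfolding I_def using crosses_pair_iff_separates[OF \<open>x < y\<close> \<open>s < t\<close>] that assms(5,6) by blast
  have "I a \<longrightarrow> I c \<longrightarrow> I b" "I b \<longrightarrow> I d \<longrightarrow> I c"
    using order unfolding I_def by auto
  moreover have "crosses {a, b} {s, t} \<longleftrightarrow> I a \<noteq> I b" "crosses {c, d} {s, t} \<longleftrightarrow> I c \<noteq> I d"
    "crosses {a, c} {s, t} \<longleftrightarrow> I a \<noteq> I c" "crosses {b, d} {s, t} \<longleftrightarrow> I b \<noteq> I d"
    "crosses {d, a} {s, t} \<longleftrightarrow> I a \<noteq> I d" "crosses {b, c} {s, t} \<longleftrightarrow> I b \<noteq> I c"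
    using order by (simp_all add: separates insert_commute[of d a])
  ultimately show "of_bool (crosses {a, b} {s, t}) + of_bool (crosses {c, d} {s, t})
      \<le> of_bool (crosses {a, c} {s, t}) + (of_bool (crosses {b, d} {s, t}) :: nat)"
    "of_bool (crosses {d, a} {s, t}) + of_bool (crosses {b, c} {s, t})
      \<le> of_bool (crosses {a, c} {s, t}) + (of_bool (crosses {b, d} {s, t}) :: nat)"
    using of_bool_neq_interval_le[of "I a" "I c" "I b" "I d"] by simp_all
qed

definition crossing_count :: "chord set \<Rightarrow> nat" where
  "crossing_count E = (\<Sum>x\<in>E. \<Sum>y\<in>E. of_bool (crosses x y))"

lemma crossing_count_insert2:
  assumes "finite R" "x \<notin> R" "y \<notin> R" "x \<noteq> y"
  shows "crossing_count (insert x (insert y R)) = crossing_count R + 2 * of_bool (crosses x y)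
     + 2 * (\<Sum>z\<in>R. of_bool (crosses x z) + of_bool (crosses y z))"
proof -
  have "finite (insert y R)" "x \<notin> insert y R"
    using assms by auto
  note insert_x = sum.insert[OF this] and insert_y = sum.insert[OF assms(1,3)]
  have "crossing_count (insert x (insert y R)) =
      (of_bool (crosses x x) + (of_bool (crosses x y) + (\<Sum>z\<in>R. of_bool (crosses x z)))) +
      ((of_bool (crosses y x) + (of_bool (crosses y y) + (\<Sum>z\<in>R. of_bool (crosses y z)))) +
      (\<Sum>z\<in>R. of_bool (crosses z x) + (of_bool (crosses z y) + (\<Sum>w\<in>R. of_bool (crosses z w)))))"
    unfolding crossing_count_def by (simp only: insert_x insert_y)
  moreover have "(\<Sum>z\<in>R. of_bool (crosses z x)) = (\<Sum>z\<in>R. of_bool (crosses x z) :: nat)"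
    "(\<Sum>z\<in>R. of_bool (crosses z y)) = (\<Sum>z\<in>R. of_bool (crosses y z) :: nat)"
    by (simp_all only: crosses_sym)
  ultimately show ?thesis
    unfolding crossing_count_def sum.distrib by (simp add: crosses_irrefl crosses_sym[of y x])
qed

lemma expansion_rest_disjoint:
  assumes "chord_diagram E" "{a, c} \<in> E" "{b, d} \<in> E" "e \<in> E - {{a, c}, {b, d}}"
  shows "e \<inter> {a, b, c, d} = {}"
  using chord_diagram_disjoint[OF assms(1)] assms(2-4) by blast

lemma chord_diagram_expand:
  assumes cd: "chord_diagram E" and chords: "{a, c} \<in> E" "{b, d} \<in> E"
    and order: "a < b" "b < c" "c < d"
  shows "chord_diagram ((E - {{a, c}, {b, d}}) \<union> {{a, b}, {c, d}})"
    "chord_diagram ((E - {{a, c}, {b, d}}) \<union> {{d, a}, {b, c}})"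
proof -
  define R where "R = E - {{a, c}, {b, d}}"
  have "chord_diagram R"
    using cd chord_diagram_subset by (auto simp: R_def)
  moreover have "points R \<inter> {a, b, c, d} = {}"
    using expansion_rest_disjoint[OF cd chords] by (auto simp: R_def points_def)
  ultimately have "chord_diagram (insert {a, b} (insert {c, d} R))"
    "chord_diagram (insert {a, d} (insert {b, c} R))"
    using order by (auto intro!: chord_diagram_insert)
  then show "chord_diagram (R \<union> {{a, b}, {c, d}})" "chord_diagram (R \<union> {{d, a}, {b, c}})"
    by (simp_all add: insert_commute)
qed

lemma points_expand:
  assumes "{a, c} \<in> E" "{b, d} \<in> E"
  shows "points ((E - {{a, c}, {b, d}}) \<union> {{a, b}, {c, d}}) = points E"
    "points ((E - {{a, c}, {b, d}}) \<union> {{d, a}, {b, c}}) = points E"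
  using assms unfolding points_def by blast+

lemma crossing_count_expand_less:
  assumes cd: "chord_diagram E" and chords: "{a, c} \<in> E" "{b, d} \<in> E"
    and order: "a < b" "b < c" "c < d"
  shows "crossing_count ((E - {{a, c}, {b, d}}) \<union> {{a, b}, {c, d}}) < crossing_count E"
    "crossing_count ((E - {{a, c}, {b, d}}) \<union> {{d, a}, {b, c}}) < crossing_count E"
proof -
  define R where "R = E - {{a, c}, {b, d}}"
  have "finite R"
    using chord_diagram_finite[OF cd] by (simp add: R_def)
  have disjoint: "e \<inter> {a, b, c, d} = {}" if "e \<in> R" for e
    using expansion_rest_disjoint[OF cd chords] that by (simp add: R_def)
  then have not_in_R: "{a, b} \<notin> R" "{c, d} \<notin> R" "{d, a} \<notin> R" "{b, c} \<notin> R" "{a, c} \<notin> R" "{b, d} \<notin> R"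
    by blast+
  have distinct: "{a, c} \<noteq> {b, d}" "{a, b} \<noteq> {c, d}" "{d, a} \<noteq> {b, c}"
    using order by (auto simp: doubleton_eq_iff)
  have "crosses {a, c} {b, d}" "\<not> crosses {a, b} {c, d}" "\<not> crosses {d, a} {b, c}"
    using order by (auto simp: crosses_pair_iff insert_commute[of d a])
  moreover have "E = insert {a, c} (insert {b, d} R)"
    using chords by (auto simp: R_def)
  moreover have "R \<union> {{a, b}, {c, d}} = insert {a, b} (insert {c, d} R)"
    "R \<union> {{d, a}, {b, c}} = insert {d, a} (insert {b, c} R)"
    by auto
  have pointwise: "of_bool (crosses {a, b} y) + of_bool (crosses {c, d} y) \<le>
        of_bool (crosses {a, c} y) + (of_bool (crosses {b, d} y) :: nat)"
      "of_bool (crosses {d, a} y) + of_bool (crosses {b, c} y) \<le>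
        of_bool (crosses {a, c} y) + (of_bool (crosses {b, d} y) :: nat)" if "y \<in> R" for y
  proof -
    obtain s t where st: "s < t" "y = {s, t}"
      using chord_diagram_chordE[OF chord_diagram_subset[OF cd]] \<open>y \<in> R\<close> by (metis Diff_subset R_def)
    have "s \<notin> {a, b, c, d}" "t \<notin> {a, b, c, d}"
      using disjoint[OF \<open>y \<in> R\<close>] st(2) by auto
    note resolution = crossings_of_resolution_le[OF order st(1) this]
    show "of_bool (crosses {a, b} y) + of_bool (crosses {c, d} y) \<le>
        of_bool (crosses {a, c} y) + (of_bool (crosses {b, d} y) :: nat)"
      unfolding st(2) by (fact resolution(1))
    show "of_bool (crosses {d, a} y) + of_bool (crosses {b, c} y) \<le>
        of_bool (crosses {a, c} y) + (of_bool (crosses {b, d} y) :: nat)"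
      unfolding st(2) by (fact resolution(2))
  qed
  moreover have "(\<Sum>y\<in>R. of_bool (crosses {a, b} y) + of_bool (crosses {c, d} y)) \<le>
      (\<Sum>y\<in>R. of_bool (crosses {a, c} y) + (of_bool (crosses {b, d} y) :: nat))"
    using pointwise(1) by (rule sum_mono)
  moreover have "(\<Sum>y\<in>R. of_bool (crosses {d, a} y) + of_bool (crosses {b, c} y)) \<le>
      (\<Sum>y\<in>R. of_bool (crosses {a, c} y) + (of_bool (crosses {b, d} y) :: nat))"
    using pointwise(2) by (rule sum_mono)
  ultimately show "crossing_count ((E - {{a, c}, {b, d}}) \<union> {{a, b}, {c, d}}) < crossing_count E"
    "crossing_count ((E - {{a, c}, {b, d}}) \<union> {{d, a}, {b, c}}) < crossing_count E"
    unfolding R_def[symmetric] using \<open>finite R\<close> not_in_R distinct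
    by (simp_all add: crossing_count_insert2)
qed

lemma crossing_of_intersecting:
  assumes "\<not> nonintersecting E"
  obtains a b c d where "{a, c} \<in> E" "{b, d} \<in> E" "a < b" "b < c" "c < d"
  using assms unfolding nonintersecting_def crosses_def by blast

lemma expands_exists: "chord_diagram E \<Longrightarrow> \<exists>k. expands E k"
proof (induction "crossing_count E" arbitrary: E rule: less_induct)
  case less
  show ?case
  proof (cases "nonintersecting E")
    case False
    then obtain a b c d where crossing: "{a, c} \<in> E" "{b, d} \<in> E" "a < b" "b < c" "c < d"
      by (rule crossing_of_intersecting)
    then show ?thesis
      using less.hyps[OF crossing_count_expand_less(1) chord_diagram_expand(1)]
        less.hyps[OF crossing_count_expand_less(2) chord_diagram_expand(2)] less.prems
      by (meson expands.expand)
  qed (blast intro: expands.finished)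
qed

lemma expands_expansion_invariant:
  "expands E k \<Longrightarrow> chord_diagram E \<Longrightarrow> int k = expansion_invariant (\<lambda>_. 0) E"
proof (induction rule: expands.induct)
  case (finished E)
  then show ?case
    by (simp add: expansion_invariant_nonintersecting)
next
  case (expand a c E b d k1 k2)
  then show ?case
    using chord_diagram_expand expansion_invariant_expand by simp
qed

lemma ex_eq_expansion_invariant:
  assumes "chord_diagram E"
  shows "int (ex E) = expansion_invariant (\<lambda>_. 0) E"
proof -
  obtain k where "expands E k"
    using expands_exists[OF assms] by blast
  moreover have "k' = k" if "expands E k'" for k'
    using expands_expansion_invariant[OF that assms] expands_expansion_invariant[OF \<open>expands E k\<close> assms]
    by simp
  ultimately have "ex E = k"
    unfolding ex_def by (rule the_equality)
  with \<open>expands E k\<close> assms show ?thesis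
    by (simp add: expands_expansion_invariant)
qed

lemma expansion_invariant_resolve_left_chord:
  assumes cd: "chord_diagram D" and order: "u < p" "p < v" "v < q"
    and outside: "\<forall>y\<in>points D. u < y \<and> (y < p \<or> q < y)"
  shows "expansion_invariant \<alpha> (insert {u, v} (insert {p, q} D)) =
    (1 + \<alpha> q - \<alpha> v) * expansion_invariant \<alpha> (insert {u, p} D) +
    (1 + \<alpha> v - \<alpha> p) * expansion_invariant \<alpha> (insert {u, q} D)"
proof -
  have not_points: "u \<notin> points D" "p \<notin> points D" "q \<notin> points D" "v \<notin> points D"
    using outside order by fastforce+
  then have "chord_diagram (insert {u, v} (insert {p, q} D))"
    using order by (intro chord_diagram_insert cd) auto
  moreover have "{u, v} \<noteq> {p, q}" "{u, v} \<notin> D" "{p, q} \<notin> D"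
    using order not_points in_points by (auto simp: doubleton_eq_iff)
  ultimately have "expansion_invariant \<alpha> (insert {u, v} (insert {p, q} D)) =
      expansion_invariant \<alpha> (insert {v, q} (insert {u, p} D)) +
      expansion_invariant \<alpha> (insert {p, v} (insert {u, q} D))"
    using expansion_invariant_expand[of _ u v p q \<alpha>] order
    by (simp add: insert_commute insert_Diff_if)
  moreover have "expansion_invariant \<alpha> (insert {v, q} (insert {u, p} D)) =
      (1 + \<alpha> q - \<alpha> v) * expansion_invariant \<alpha> (insert {u, p} D)"
    using order not_points outside
    by (intro expansion_invariant_insert_short_chord chord_diagram_insert cd) auto
  moreover have "expansion_invariant \<alpha> (insert {p, v} (insert {u, q} D)) =
      (1 + \<alpha> v - \<alpha> p) * expansion_invariant \<alpha> (insert {u, q} D)"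
    using order not_points outside
    by (intro expansion_invariant_insert_short_chord chord_diagram_insert cd) auto
  ultimately show ?thesis
    by simp
qed

definition step_weight :: "int \<Rightarrow> nat \<Rightarrow> nat \<Rightarrow> int" where
  "step_weight z t y = (if t \<le> y then z - 1 else 0)"

definition spans :: "nat \<Rightarrow> chord \<Rightarrow> bool" where
  "spans t c \<longleftrightarrow> Min c < t \<and> t \<le> Max c"

lemma expansion_invariant_left_chord_nested:
  assumes "chord_diagram D" "nonintersecting D"
    and "\<forall>y\<in>points D. u < y" "u < v" "u < t" "v \<notin> points D"
    and "\<forall>c\<in>D. spans t c \<and> spans v c"
  shows "2 * expansion_invariant (step_weight z t) (insert {u, v} D) =
    (z + 1) ^ (card D + 1) + (if t \<le> v then 1 else -1) * (z - 1) ^ (card D + 1)"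
  using assms
proof (induction "card D" arbitrary: D v rule: less_induct)
  case less
  let ?\<alpha> = "step_weight z t"
  have "finite D"
    using less.prems(1) by (rule chord_diagram_finite)
  show ?case
  proof (cases "D = {}")
    case True
    then have "expansion_invariant ?\<alpha> (insert {u, v} D) = 1 + ?\<alpha> v - ?\<alpha> u"
      using expansion_invariant_insert_short_chord[of "{}" u v ?\<alpha>] less.prems(4)
      by (simp add: chord_diagram_def)
    then show ?thesis
      using True less.prems(5) by (simp add: step_weight_def)
  next
    case False
    have "\<forall>c\<in>D. Min c < v \<and> v < Max c"
    proof
      fix c assume "c \<in> D"
      then have "Min c < v" "v \<le> Max c" "Max c \<noteq> v"
        using less.prems(6,7) Max_in_points[OF less.prems(1)] by (fastforce simp: spans_def)+
      then show "Min c < v \<and> v < Max c"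
        by simp
    qed
    then obtain p q where pq: "{p, q} \<in> D" "p < v" "v < q"
      and outer: "\<forall>c\<in>D - {{p, q}}. Min c < p \<and> q < Max c"
      by (rule nonintersecting_common_point_innermost[OF less.prems(1,2) False])
    have "spans t {p, q}" "p < q"
      using less.prems(7) pq by auto
    then have pq_order: "p < v" "v < q" "p < t" "t \<le> q"
      using pq by (simp_all add: spans_def)
    define D' where "D' = D - {{p, q}}"
    have D: "D = insert {p, q} D'" "{p, q} \<notin> D'" and "finite D'"
      using pq(1) \<open>finite D\<close> by (auto simp: D'_def)
    have cd': "chord_diagram D'" and nc': "nonintersecting D'"
      using less.prems(1,2) chord_diagram_subset nonintersecting_subset by (auto simp: D'_def)
    have outer': "\<forall>c\<in>D'. Min c < p \<and> q < Max c"
      using outer by (simp add: D'_def)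
    have "u < p"
      using less.prems(3) in_points[OF pq(1)] by auto
    have outside: "\<forall>y\<in>points D'. u < y \<and> (y < p \<or> q < y)"
    proof
      fix y assume "y \<in> points D'"
      then obtain c where "c \<in> D'" "y = Min c \<or> y = Max c"
        by (rule chord_diagram_pointE[OF cd'])
      moreover have "y \<in> points D"
        using \<open>y \<in> points D'\<close> by (simp add: D)
      ultimately show "u < y \<and> (y < p \<or> q < y)"
        using outer' less.prems(3) by auto
    qed
    have "\<forall>c\<in>D'. spans t c \<and> spans p c" "\<forall>c\<in>D'. spans t c \<and> spans q c"
      using outer' less.prems(7) pq_order unfolding D by (auto simp: spans_def)
    moreover have "card D' < card D" "\<forall>y\<in>points D'. u < y" "p \<notin> points D'" "q \<notin> points D'"
      using D \<open>finite D'\<close> outside \<open>p < q\<close> by auto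
    ultimately have IH_p: "2 * expansion_invariant ?\<alpha> (insert {u, p} D') =
        (z + 1) ^ (card D' + 1) - (z - 1) ^ (card D' + 1)"
      and IH_q: "2 * expansion_invariant ?\<alpha> (insert {u, q} D') =
        (z + 1) ^ (card D' + 1) + (z - 1) ^ (card D' + 1)"
      using less.hyps[OF _ cd' nc' _ _ less.prems(5)] \<open>u < p\<close> pq_order by simp_all
    have "2 * expansion_invariant ?\<alpha> (insert {u, v} D) =
        (z - ?\<alpha> v) * (2 * expansion_invariant ?\<alpha> (insert {u, p} D')) +
        (1 + ?\<alpha> v) * (2 * expansion_invariant ?\<alpha> (insert {u, q} D'))"
      using expansion_invariant_resolve_left_chord[OF cd' \<open>u < p\<close> pq_order(1,2) outside, of ?\<alpha>] pq_order
      by (simp add: D step_weight_def algebra_simps)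
    also have "\<dots> = (z - ?\<alpha> v) * ((z + 1) ^ (card D' + 1) - (z - 1) ^ (card D' + 1)) +
        (1 + ?\<alpha> v) * ((z + 1) ^ (card D' + 1) + (z - 1) ^ (card D' + 1))"
      by (simp only: IH_p IH_q)
    also have "\<dots> = (z + 1) ^ (card D + 1) + (if t \<le> v then 1 else -1) * (z - 1) ^ (card D + 1)"
      using D \<open>finite D'\<close> by (cases "t \<le> v") (simp_all add: step_weight_def algebra_simps)
    finally show ?thesis .
  qed
qed

lemma expansion_invariant_left_chord_nonintersecting:
  assumes "chord_diagram D" "nonintersecting D"
    and "\<forall>y\<in>points D. u < y" "u < v" "u < t" "v \<notin> points D"
    and "\<forall>c\<in>D. spans t c \<longleftrightarrow> spans v c"
  shows "2 * expansion_invariant (step_weight z t) (insert {u, v} D) =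
    (z + 1) ^ (card {c\<in>D. spans t c} + 1) +
    (if t \<le> v then 1 else -1) * (z - 1) ^ (card {c\<in>D. spans t c} + 1)"
  using assms
proof (induction "card D" arbitrary: D rule: less_induct)
  case less
  let ?\<alpha> = "step_weight z t"
  show ?case
  proof (cases "\<forall>c\<in>D. spans t c")
    case True
    then have "{c\<in>D. spans t c} = D"
      by auto
    with True less.prems show ?thesis
      by (simp add: expansion_invariant_left_chord_nested)
  next
    case False
    then obtain c0 where c0: "c0 \<in> D" "\<not> spans t c0" "\<not> spans v c0"
      using less.prems(7) by blast
    obtain p q where pq: "{p, q} \<in> D" "p < q" "Min c0 \<le> p" "q \<le> Max c0"
      and outside: "\<forall>y\<in>points (D - {{p, q}}). y < p \<or> q < y"
      by (rule nonintersecting_innermost_chord[OF less.prems(1,2) c0(1)])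
    have "\<not> spans t {p, q}" "\<not> (p < v \<and> v < q)"
      using c0(2,3) pq(2-4) by (auto simp: spans_def)
    define D' where "D' = D - {{p, q}}"
    have D: "D = insert {p, q} D'" "{p, q} \<notin> D'" and "finite D'"
      using pq(1) chord_diagram_finite[OF less.prems(1)] by (auto simp: D'_def)
    have cd': "chord_diagram D'" and nc': "nonintersecting D'"
      using less.prems(1,2) chord_diagram_subset nonintersecting_subset by (auto simp: D'_def)
    have "u < p" "v \<noteq> p" "v \<noteq> q"
      using less.prems(3,6) in_points[OF pq(1)] by auto
    then have "\<forall>y\<in>points (insert {u, v} D'). y < p \<or> q < y"
      using outside \<open>\<not> (p < v \<and> v < q)\<close> by (auto simp: D'_def)
    then have "expansion_invariant ?\<alpha> (insert {p, q} (insert {u, v} D')) =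
        (1 + ?\<alpha> q - ?\<alpha> p) * expansion_invariant ?\<alpha> (insert {u, v} D')"
      using cd' less.prems(3,4,6) pq(2)
      by (intro expansion_invariant_insert_short_chord chord_diagram_insert) (auto simp: D)
    moreover have "?\<alpha> p = ?\<alpha> q"
      using \<open>\<not> spans t {p, q}\<close> pq(2) by (simp add: spans_def step_weight_def)
    moreover have "{c\<in>D'. spans t c} = {c\<in>D. spans t c}"
      using \<open>\<not> spans t {p, q}\<close> by (auto simp: D)
    moreover have "2 * expansion_invariant ?\<alpha> (insert {u, v} D') =
        (z + 1) ^ (card {c\<in>D'. spans t c} + 1) +
        (if t \<le> v then 1 else -1) * (z - 1) ^ (card {c\<in>D'. spans t c} + 1)"
    proof (rule less.hyps[OF _ cd' nc' _ less.prems(4,5)])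
      show "card D' < card D"
        using D \<open>finite D'\<close> by simp
      show "\<forall>y\<in>points D'. u < y" "v \<notin> points D'" "\<forall>c\<in>D'. spans t c \<longleftrightarrow> spans v c"
        using less.prems(3,6,7) by (auto simp: D)
    qed
    moreover have "insert {u, v} D = insert {p, q} (insert {u, v} D')"
      unfolding D by (rule insert_commute)
    ultimately show ?thesis
      by simp
  qed
qed

lemma expansion_invariant_step_weight_nonintersecting:
  assumes "chord_diagram D" "nonintersecting D"
  shows "expansion_invariant (step_weight w t) D = w ^ card {c\<in>D. spans t c}"
proof -
  have "expansion_invariant (step_weight w t) D = (\<Prod>c\<in>D. if spans t c then w else 1)"
    unfolding expansion_invariant_nonintersecting[OF assms]
  proof (rule prod.cong[OF refl])
    fix c assume "c \<in> D"
    then have "Min c < Max c"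
      by (rule chord_diagram_Min_Max(2)[OF assms(1)])
    then show "1 + step_weight w t (Max c) - step_weight w t (Min c) = (if spans t c then w else 1)"
      by (auto simp: step_weight_def spans_def)
  qed
  also have "\<dots> = w ^ card {c\<in>D. spans t c}"
    using chord_diagram_finite[OF assms(1)] by (simp add: prod.inter_filter[symmetric])
  finally show ?thesis .
qed

lemma expansion_invariant_left_chord:
  assumes "chord_diagram D" "\<forall>y\<in>points D. u < y" "u < v" "v \<notin> points D"
  shows "2 * expansion_invariant (step_weight z v) (insert {u, v} D) =
    (z + 1) * expansion_invariant (step_weight (z + 1) v) D +
    (z - 1) * expansion_invariant (step_weight (z - 1) v) D"
  using assms
proof (induction "crossing_count D" arbitrary: D rule: less_induct)
  case less
  show ?case
  proof (cases "nonintersecting D")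
    case True
    let ?k = "card {c\<in>D. spans v c}"
    have "2 * expansion_invariant (step_weight z v) (insert {u, v} D) = (z + 1) ^ (?k + 1) + (z - 1) ^ (?k + 1)"
      using expansion_invariant_left_chord_nonintersecting[OF less.prems(1) True less.prems(2,3,3,4)] by simp
    then show ?thesis
      by (simp add: expansion_invariant_step_weight_nonintersecting[OF less.prems(1) True])
  next
    case False
    then obtain a b c d where crossing: "{a, c} \<in> D" "{b, d} \<in> D" "a < b" "b < c" "c < d"
      by (rule crossing_of_intersecting)
    define D1 D2 where "D1 = (D - {{a, c}, {b, d}}) \<union> {{a, b}, {c, d}}"
      and "D2 = (D - {{a, c}, {b, d}}) \<union> {{d, a}, {b, c}}"
    have "u \<notin> points D"
      using less.prems(2) by auto
    then have "{u, v} \<notin> {{a, c}, {b, d}}"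
      using in_points[OF crossing(1)] in_points[OF crossing(2)] by auto
    then have "(insert {u, v} D - {{a, c}, {b, d}}) \<union> {{a, b}, {c, d}} = insert {u, v} D1"
      "(insert {u, v} D - {{a, c}, {b, d}}) \<union> {{d, a}, {b, c}} = insert {u, v} D2"
      by (simp_all add: D1_def D2_def insert_Diff_if insert_commute)
    moreover have "chord_diagram (insert {u, v} D)"
      using chord_diagram_insert[OF less.prems(1,3) \<open>u \<notin> points D\<close> less.prems(4)] .
    ultimately have "expansion_invariant \<alpha> (insert {u, v} D) =
        expansion_invariant \<alpha> (insert {u, v} D1) + expansion_invariant \<alpha> (insert {u, v} D2)" for \<alpha>
      using expansion_invariant_expand[of "insert {u, v} D" a c b d \<alpha>] crossing by simp
    moreover have "expansion_invariant \<alpha> D = expansion_invariant \<alpha> D1 + expansion_invariant \<alpha> D2" for \<alpha>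
      unfolding D1_def D2_def by (rule expansion_invariant_expand[OF less.prems(1) crossing])
    moreover have "points D1 = points D" "points D2 = points D"
      unfolding D1_def D2_def using points_expand[OF crossing(1,2)] by simp_all
    moreover have "2 * expansion_invariant (step_weight z v) (insert {u, v} D1) =
        (z + 1) * expansion_invariant (step_weight (z + 1) v) D1 +
        (z - 1) * expansion_invariant (step_weight (z - 1) v) D1"
      using less.hyps[OF _ _ _ less.prems(3)] less.prems(2,4) \<open>points D1 = points D\<close>
        crossing_count_expand_less(1)[OF less.prems(1) crossing] chord_diagram_expand(1)[OF less.prems(1) crossing]
      unfolding D1_def by simp
    moreover have "2 * expansion_invariant (step_weight z v) (insert {u, v} D2) =
        (z + 1) * expansion_invariant (step_weight (z + 1) v) D2 +
        (z - 1) * expansion_invariant (step_weight (z - 1) v) D2"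
      using less.hyps[OF _ _ _ less.prems(3)] less.prems(2,4) \<open>points D2 = points D\<close>
        crossing_count_expand_less(2)[OF less.prems(1) crossing] chord_diagram_expand(2)[OF less.prems(1) crossing]
      unfolding D2_def by simp
    ultimately show ?thesis
      by (simp add: algebra_simps)
  qed
qed

lemma n_crossing_leftmost_chord:
  assumes "n_crossing (Suc n) E"
  obtains u v E' where "E = insert {u, v} E'" "{u, v} \<notin> E'" "u < v" "n_crossing n E'"
    "\<forall>c\<in>E'. u < Min c \<and> Min c < v \<and> v < Max c"
proof -
  have cd: "chord_diagram E" and "card E = Suc n" and crossing: "\<forall>x\<in>E. \<forall>y\<in>E. x \<noteq> y \<longrightarrow> crosses x y"
    using assms unfolding n_crossing_def by auto
  then obtain c where "c \<in> E"
    by fastforce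
  then obtain a b where "c = {a, b}"
    using chord_diagram_chordE[OF cd] by blast
  then have "points E \<noteq> {}"
    using in_points[OF \<open>c \<in> E\<close>] by blast
  define u where "u = Min (points E)"
  have "u \<in> points E" and u_min: "\<forall>y\<in>points E. u \<le> y"
    using \<open>points E \<noteq> {}\<close> chord_diagram_finite_points[OF cd] by (simp_all add: u_def)
  obtain c_u where "c_u \<in> E" "u \<in> c_u"
    using \<open>u \<in> points E\<close> by (auto simp: points_def)
  obtain a v where "a < v" "c_u = {a, v}"
    using chord_diagram_chordE[OF cd \<open>c_u \<in> E\<close>] by blast
  moreover have "u \<le> a"
    using u_min in_points[OF \<open>c_u \<in> E\<close>] \<open>c_u = {a, v}\<close> by simp
  ultimately have uv: "{u, v} \<in> E" "u < v"
    using \<open>c_u \<in> E\<close> \<open>u \<in> c_u\<close> by auto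
  define E' where "E' = E - {{u, v}}"
  have E: "E = insert {u, v} E'" "{u, v} \<notin> E'"
    using uv(1) by (auto simp: E'_def)
  have "E' \<subseteq> E"
    by (auto simp: E'_def)
  then have "\<forall>x\<in>E'. \<forall>y\<in>E'. x \<noteq> y \<longrightarrow> crosses x y"
    using crossing by blast
  moreover have "chord_diagram E'" "card E' = n"
    using chord_diagram_subset[OF cd] chord_diagram_finite[OF cd] \<open>card E = Suc n\<close> uv(1)
    by (auto simp: E'_def)
  ultimately have "n_crossing n E'"
    unfolding n_crossing_def by blast
  moreover have "u < Min c \<and> Min c < v \<and> v < Max c" if "c \<in> E'" for c
  proof -
    have "c \<in> E" "c \<noteq> {u, v}"
      using that by (auto simp: E'_def)
    moreover obtain r s where "r < s" "c = {r, s}"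
      using chord_diagram_chordE[OF cd \<open>c \<in> E\<close>] by blast
    moreover have "crosses {u, v} c"
      using crossing uv(1) \<open>c \<in> E\<close> \<open>c \<noteq> {u, v}\<close> by metis
    ultimately have "crosses {u, v} {r, s}"
      by simp
    have "u \<le> r"
      using u_min in_points[OF \<open>c \<in> E\<close>] \<open>c = {r, s}\<close> by simp
    with \<open>crosses {u, v} {r, s}\<close> show ?thesis
      using uv(2) \<open>r < s\<close> \<open>c = {r, s}\<close> by (auto simp: crosses_pair_iff)
  qed
  ultimately show thesis
    using that E uv(2) by blast
qed

definition admissible_fillings :: "nat \<Rightarrow> (nat \<times> nat \<Rightarrow> nat) set" where
  "admissible_fillings n = {M \<in> zero_one_fillings n. good_filling n M}"

definition empty_columns :: "nat \<Rightarrow> (nat \<times> nat \<Rightarrow> nat) \<Rightarrow> nat set" where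
  "empty_columns n M = {j. j < n \<and> (\<forall>i. (i, j) \<in> staircase n \<longrightarrow> M (i, j) = 0)}"

definition filling_polynomial :: "nat \<Rightarrow> int \<Rightarrow> int" where
  "filling_polynomial n z = (\<Sum>M\<in>admissible_fillings n. z ^ card (empty_columns n M))"

definition add_top_row :: "nat \<Rightarrow> (nat \<times> nat \<Rightarrow> nat) \<Rightarrow> nat set \<Rightarrow> nat \<times> nat \<Rightarrow> nat" where
  "add_top_row n T S = restrict (\<lambda>(i, j). if i = 0 then of_bool (j \<in> S) else T (i - 1, j))
     (staircase (Suc n))"

definition drop_top_row :: "nat \<Rightarrow> (nat \<times> nat \<Rightarrow> nat) \<Rightarrow> nat \<times> nat \<Rightarrow> nat" where
  "drop_top_row n M = restrict (\<lambda>(i, j). M (Suc i, j)) (staircase n)"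

definition top_row :: "nat \<Rightarrow> (nat \<times> nat \<Rightarrow> nat) \<Rightarrow> nat set" where
  "top_row n M = {j. j < Suc n \<and> M (0, j) = 1}"

lemma mem_staircase_iff [simp]: "(i, j) \<in> staircase n \<longleftrightarrow> i < n \<and> j < n - i"
  unfolding staircase_def by simp

lemma finite_staircase: "finite (staircase n)"
  by (rule finite_subset[of _ "{..<n} \<times> {..<n}"]) auto

lemma finite_column: "finite {i. (i, j) \<in> staircase n}"
  by (rule finite_subset[of _ "{..<n}"]) auto

lemma finite_admissible_fillings: "finite (admissible_fillings n)"
proof -
  have "finite (staircase n \<rightarrow>\<^sub>E {0, 1::nat})"
    using finite_staircase by (intro finite_PiE) auto
  then show ?thesis
    unfolding admissible_fillings_def zero_one_fillings_def by (rule finite_subset[rotated]) auto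
qed

lemma admissible_fillings_iff:
  "M \<in> admissible_fillings n \<longleftrightarrow>
    (\<forall>x\<in>staircase n. M x \<in> {0, 1}) \<and> M \<in> extensional (staircase n) \<and>
    (\<forall>j. (\<Sum>i\<in>{i. (i, j) \<in> staircase n}. M (i, j)) \<le> 1) \<and> (\<forall>i<n. even (\<Sum>j<n - i. M (i, j)))"
  unfolding admissible_fillings_def zero_one_fillings_def good_filling_def by (auto simp: PiE_iff)

lemma column_sum_Suc:
  "(\<Sum>i\<in>{i. (i, j) \<in> staircase (Suc n)}. f i) =
    (if j \<le> n then f 0 else 0) + (\<Sum>i\<in>{i. (i, j) \<in> staircase n}. f (Suc i) :: nat)"
proof -
  have "{i. (i, j) \<in> staircase (Suc n)} = (if j \<le> n then {0} else {}) \<union> Suc ` {i. (i, j) \<in> staircase n}"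
  proof -
    have "x \<in> {i. (i, j) \<in> staircase (Suc n)} \<longleftrightarrow>
        x \<in> (if j \<le> n then {0} else {}) \<union> Suc ` {i. (i, j) \<in> staircase n}" for x
      by (cases x) auto
    then show ?thesis
      by blast
  qed
  moreover have "(if j \<le> n then {0} else {}) \<inter> Suc ` {i. (i, j) \<in> staircase n} = {}"
    by auto
  ultimately show ?thesis
    using finite_column by (simp add: sum.union_disjoint sum.reindex)
qed

lemma sum_indicator_eq_card: "S \<subseteq> A \<Longrightarrow> finite A \<Longrightarrow> (\<Sum>j\<in>A. of_bool (j \<in> S)) = (card S :: nat)"
  by (simp add: Int_absorb1 Int_def[symmetric])

lemma sum_even_subsets:
  fixes z :: int
  assumes "finite A"
  shows "2 * (\<Sum>S | S \<subseteq> A \<and> even (card S). z ^ (card A - card S)) = (z + 1) ^ card A + (z - 1) ^ card A"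
proof -
  have power_sum: "(w + z) ^ card A = (\<Sum>S\<in>Pow A. w ^ card S * z ^ (card A - card S))" for w
  proof -
    have "(w + z) ^ card A = (\<Prod>x\<in>A. w + z)"
      by simp
    also have "\<dots> = (\<Sum>S\<in>Pow A. (\<Prod>x\<in>S. w) * (\<Prod>x\<in>A - S. z))"
      by (rule prod_add[OF assms])
    also have "\<dots> = (\<Sum>S\<in>Pow A. w ^ card S * z ^ (card A - card S))"
      using assms by (intro sum.cong) (auto simp: card_Diff_subset finite_subset)
    finally show ?thesis .
  qed
  have filter: "{S. S \<subseteq> A \<and> even (card S)} = {S\<in>Pow A. even (card S)}"
    by auto
  have "2 * (\<Sum>S | S \<subseteq> A \<and> even (card S). z ^ (card A - card S)) =
      2 * (\<Sum>S\<in>Pow A. if even (card S) then z ^ (card A - card S) else 0)"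
    unfolding filter using assms by (subst sum.inter_filter) simp_all
  also have "\<dots> = (\<Sum>S\<in>Pow A. (1 + (-1) ^ card S) * z ^ (card A - card S))"
    unfolding sum_distrib_left by (intro sum.cong refl) simp
  also have "\<dots> = (1 + z) ^ card A + (-1 + z) ^ card A"
    unfolding power_sum by (simp add: sum.distrib algebra_simps)
  finally show ?thesis
    by (simp add: add.commute)
qed

lemma add_top_row_top [simp]: "j < Suc n \<Longrightarrow> add_top_row n T S (0, j) = of_bool (j \<in> S)"
  unfolding add_top_row_def by simp

lemma add_top_row_Suc [simp]: "(i, j) \<in> staircase n \<Longrightarrow> add_top_row n T S (Suc i, j) = T (i, j)"
  unfolding add_top_row_def by simp

lemma drop_top_row_apply [simp]: "(i, j) \<in> staircase n \<Longrightarrow> drop_top_row n M (i, j) = M (Suc i, j)"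
  unfolding drop_top_row_def by simp

lemma column_sum_add_top_row:
  "(\<Sum>i\<in>{i. (i, j) \<in> staircase (Suc n)}. add_top_row n T S (i, j)) =
    (if j \<le> n then of_bool (j \<in> S) else 0) + (\<Sum>i\<in>{i. (i, j) \<in> staircase n}. T (i, j))"
  unfolding column_sum_Suc by simp

lemma add_top_row_admissible:
  assumes T: "T \<in> admissible_fillings n" and S: "S \<subseteq> insert n (empty_columns n T)" "even (card S)"
  shows "add_top_row n T S \<in> admissible_fillings (Suc n)"
  unfolding admissible_fillings_iff
proof (intro conjI allI impI ballI)
  have T01: "\<forall>x\<in>staircase n. T x \<in> {0, 1}"
    using T unfolding admissible_fillings_iff by blast
  fix x assume "x \<in> staircase (Suc n)"
  then show "add_top_row n T S x \<in> {0, 1}"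
    using T01 by (cases x; rename_tac i j; case_tac i) auto
next
  show "add_top_row n T S \<in> extensional (staircase (Suc n))"
    unfolding add_top_row_def by simp
next
  fix j
  have "(\<Sum>i\<in>{i. (i, j) \<in> staircase n}. T (i, j)) = 0" if "j \<in> S"
  proof (cases "j = n")
    case False
    then have "j \<in> empty_columns n T"
      using S(1) that by auto
    then show ?thesis
      unfolding empty_columns_def by simp
  qed auto
  then show "(\<Sum>i\<in>{i. (i, j) \<in> staircase (Suc n)}. add_top_row n T S (i, j)) \<le> 1"
    using T unfolding column_sum_add_top_row admissible_fillings_iff by (cases "j \<in> S") auto
next
  fix i assume "i < Suc n"
  show "even (\<Sum>j<Suc n - i. add_top_row n T S (i, j))"
  proof (cases i)
    case 0
    have "S \<subseteq> {..<Suc n}"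
      using S(1) unfolding empty_columns_def by auto
    have "(\<Sum>j<Suc n. add_top_row n T S (0, j)) = (\<Sum>j<Suc n. of_bool (j \<in> S))"
      by (intro sum.cong) auto
    also have "\<dots> = card S"
      using \<open>S \<subseteq> {..<Suc n}\<close> by (rule sum_indicator_eq_card) simp
    finally show ?thesis
      using 0 S(2) by simp
  next
    case (Suc i')
    then have "(\<Sum>j<Suc n - i. add_top_row n T S (i, j)) = (\<Sum>j<n - i'. T (i', j))"
      using \<open>i < Suc n\<close> by (intro sum.cong) auto
    then show ?thesis
      using T Suc \<open>i < Suc n\<close> unfolding admissible_fillings_iff by simp
  qed
qed

lemma drop_top_row_admissible:
  assumes M: "M \<in> admissible_fillings (Suc n)"
  shows "drop_top_row n M \<in> admissible_fillings n"
  unfolding admissible_fillings_iff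
proof (intro conjI allI impI ballI)
  fix x assume "x \<in> staircase n"
  then show "drop_top_row n M x \<in> {0, 1}"
    using M unfolding admissible_fillings_iff by (cases x) auto
next
  show "drop_top_row n M \<in> extensional (staircase n)"
    unfolding drop_top_row_def by simp
next
  fix j
  show "(\<Sum>i\<in>{i. (i, j) \<in> staircase n}. drop_top_row n M (i, j)) \<le> 1"
  proof -
    have "(\<Sum>i\<in>{i. (i, j) \<in> staircase (Suc n)}. M (i, j)) =
        (if j \<le> n then M (0, j) else 0) + (\<Sum>i\<in>{i. (i, j) \<in> staircase n}. drop_top_row n M (i, j))"
      unfolding column_sum_Suc by (auto intro!: sum.cong)
    then show ?thesis
      using M unfolding admissible_fillings_iff by (metis add_leE)
  qed
next
  fix i assume "i < n"
  then have "(\<Sum>j<n - i. drop_top_row n M (i, j)) = (\<Sum>j<Suc n - Suc i. M (Suc i, j))"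
    by (intro sum.cong) auto
  moreover have "even (\<Sum>j<Suc n - Suc i. M (Suc i, j))"
    using M \<open>i < n\<close> unfolding admissible_fillings_iff by blast
  ultimately show "even (\<Sum>j<n - i. drop_top_row n M (i, j))"
    by simp
qed

lemma top_row_subset:
  assumes M: "M \<in> admissible_fillings (Suc n)"
  shows "top_row n M \<subseteq> insert n (empty_columns n (drop_top_row n M))"
proof
  fix j assume "j \<in> top_row n M"
  then have j: "j < Suc n" "M (0, j) = 1"
    unfolding top_row_def by auto
  show "j \<in> insert n (empty_columns n (drop_top_row n M))"
  proof (cases "j = n")
    case False
    have "(\<Sum>i\<in>{i. (i, j) \<in> staircase (Suc n)}. M (i, j)) \<le> 1"
      using M unfolding admissible_fillings_iff by blast
    then have "(\<Sum>i\<in>{i. (i, j) \<in> staircase n}. M (Suc i, j)) = 0"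
      using j unfolding column_sum_Suc by simp
    then have "\<forall>i. (i, j) \<in> staircase n \<longrightarrow> drop_top_row n M (i, j) = 0"
      using finite_column by simp
    then show ?thesis
      unfolding empty_columns_def using False j(1) by simp
  qed simp
qed

lemma even_card_top_row:
  assumes M: "M \<in> admissible_fillings (Suc n)"
  shows "even (card (top_row n M))"
proof -
  have "(\<Sum>j<Suc n. M (0, j)) = (\<Sum>j<Suc n. of_bool (j \<in> top_row n M))"
    using M unfolding admissible_fillings_iff top_row_def by (intro sum.cong) fastforce+
  also have "\<dots> = card (top_row n M)"
    by (rule sum_indicator_eq_card) (auto simp: top_row_def)
  finally show ?thesis
    using M unfolding admissible_fillings_iff by (metis diff_zero zero_less_Suc)
qed

lemma add_top_row_drop_top_row:
  assumes M: "M \<in> admissible_fillings (Suc n)"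
  shows "add_top_row n (drop_top_row n M) (top_row n M) = M"
proof
  fix x :: "nat \<times> nat"
  obtain i j where x: "x = (i, j)"
    by fastforce
  have "M \<in> extensional (staircase (Suc n))" "\<forall>x\<in>staircase (Suc n). M x \<in> {0, 1}"
    using M unfolding admissible_fillings_iff by blast+
  then show "add_top_row n (drop_top_row n M) (top_row n M) x = M x"
    unfolding x by (cases i) (auto simp: add_top_row_def top_row_def extensional_def)
qed

lemma drop_top_row_add_top_row:
  "T \<in> extensional (staircase n) \<Longrightarrow> drop_top_row n (add_top_row n T S) = T"
  by (rule extensionalityI[of _ "staircase n"]) (auto simp: drop_top_row_def)

lemma top_row_add_top_row: "S \<subseteq> {..<Suc n} \<Longrightarrow> top_row n (add_top_row n T S) = S"
  unfolding top_row_def by (auto simp: of_bool_def split: if_splits)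

lemma empty_columns_add_top_row:
  assumes "S \<subseteq> insert n (empty_columns n T)"
  shows "empty_columns (Suc n) (add_top_row n T S) = insert n (empty_columns n T) - S"
proof -
  have "j \<in> empty_columns (Suc n) (add_top_row n T S) \<longleftrightarrow> j \<in> insert n (empty_columns n T) - S"
    if "j < Suc n" for j
  proof -
    have "(\<forall>i. (i, j) \<in> staircase (Suc n) \<longrightarrow> add_top_row n T S (i, j) = 0) \<longleftrightarrow>
        j \<notin> S \<and> (\<forall>i. (i, j) \<in> staircase n \<longrightarrow> T (i, j) = 0)"
    proof
      assume empty: "\<forall>i. (i, j) \<in> staircase (Suc n) \<longrightarrow> add_top_row n T S (i, j) = 0"
      then have "j \<notin> S"
        using that add_top_row_top[OF that, of T S] by auto
      moreover have "T (i, j) = 0" if "(i, j) \<in> staircase n" for i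
        using empty[rule_format, of "Suc i"] that by simp
      ultimately show "j \<notin> S \<and> (\<forall>i. (i, j) \<in> staircase n \<longrightarrow> T (i, j) = 0)"
        by blast
    next
      assume "j \<notin> S \<and> (\<forall>i. (i, j) \<in> staircase n \<longrightarrow> T (i, j) = 0)"
      then show "\<forall>i. (i, j) \<in> staircase (Suc n) \<longrightarrow> add_top_row n T S (i, j) = 0"
        using that by (auto simp: less_Suc_eq_0_disj)
    qed
    then show ?thesis
      using that unfolding empty_columns_def by auto
  qed
  moreover have "empty_columns (Suc n) (add_top_row n T S) \<subseteq> {..<Suc n}"
    "insert n (empty_columns n T) \<subseteq> {..<Suc n}"
    unfolding empty_columns_def by auto
  ultimately show ?thesis
    by blast
qed

lemma filling_polynomial_Suc:
  "2 * filling_polynomial (Suc n) z = (z + 1) * filling_polynomial n (z + 1) + (z - 1) * filling_polynomial n (z - 1)"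
proof -
  define A where "A T = insert n (empty_columns n T)" for T
  define top_rows where "top_rows T = {S. S \<subseteq> A T \<and> even (card S)}" for T
  have "finite (A T)" "card (A T) = Suc (card (empty_columns n T))" for T
    unfolding A_def empty_columns_def by simp_all
  have "filling_polynomial (Suc n) z = (\<Sum>(T, S)\<in>Sigma (admissible_fillings n) top_rows. z ^ card (A T - S))"
    unfolding filling_polynomial_def
  proof (rule sum.reindex_bij_witness[where j = "\<lambda>M. (drop_top_row n M, top_row n M)"
        and i = "\<lambda>(T, S). add_top_row n T S"])
    fix M assume "M \<in> admissible_fillings (Suc n)"
    then show "(case (drop_top_row n M, top_row n M) of (T, S) \<Rightarrow> add_top_row n T S) = M"
      "(drop_top_row n M, top_row n M) \<in> Sigma (admissible_fillings n) top_rows"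
      "(case (drop_top_row n M, top_row n M) of (T, S) \<Rightarrow> z ^ card (A T - S)) = z ^ card (empty_columns (Suc n) M)"
      using add_top_row_drop_top_row drop_top_row_admissible top_row_subset even_card_top_row
        empty_columns_add_top_row[OF top_row_subset]
      by (auto simp: top_rows_def A_def)
  next
    fix p assume "p \<in> Sigma (admissible_fillings n) top_rows"
    then obtain T S where p: "p = (T, S)" and T: "T \<in> admissible_fillings n"
      and S: "S \<subseteq> insert n (empty_columns n T)" "even (card S)"
      by (auto simp: top_rows_def A_def)
    moreover have "T \<in> extensional (staircase n)"
      using T unfolding admissible_fillings_iff by blast
    moreover have "S \<subseteq> {..<Suc n}"
      using S(1) unfolding empty_columns_def by auto
    ultimately show "(drop_top_row n (case p of (T, S) \<Rightarrow> add_top_row n T S),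
        top_row n (case p of (T, S) \<Rightarrow> add_top_row n T S)) = p"
      "(case p of (T, S) \<Rightarrow> add_top_row n T S) \<in> admissible_fillings (Suc n)"
      by (simp_all add: drop_top_row_add_top_row top_row_add_top_row add_top_row_admissible)
  qed
  also have "\<dots> = (\<Sum>T\<in>admissible_fillings n. \<Sum>S\<in>top_rows T. z ^ (card (A T) - card S))"
    using finite_admissible_fillings \<open>\<And>T. finite (A T)\<close>
    by (subst sum.Sigma) (auto simp: top_rows_def card_Diff_subset finite_subset intro!: sum.cong)
  finally have "2 * filling_polynomial (Suc n) z =
      (\<Sum>T\<in>admissible_fillings n. (z + 1) ^ card (A T) + (z - 1) ^ card (A T))"
    using sum_even_subsets[OF \<open>\<And>T. finite (A T)\<close>] by (simp add: sum_distrib_left top_rows_def)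
  then show ?thesis
    unfolding filling_polynomial_def \<open>\<And>T. card (A T) = Suc (card (empty_columns n T))\<close>
    by (simp add: sum.distrib sum_distrib_left)
qed

lemma filling_polynomial_0 [simp]: "filling_polynomial 0 z = 1"
proof -
  have "admissible_fillings 0 = {\<lambda>x. undefined}"
    unfolding admissible_fillings_def zero_one_fillings_def good_filling_def staircase_def by auto
  then show ?thesis
    unfolding filling_polynomial_def empty_columns_def by simp
qed

lemma expansion_invariant_n_crossing:
  assumes "n_crossing n E" "\<forall>c\<in>E. spans t c"
  shows "expansion_invariant (step_weight z t) E = filling_polynomial n z"
  using assms
proof (induction n arbitrary: E t z)
  case 0
  then have "E = {}"
    unfolding n_crossing_def chord_diagram_def by auto
  then show ?case
    by simp
next
  case (Suc n)
  obtain u v E' where E: "E = insert {u, v} E'" "{u, v} \<notin> E'" "u < v" and "n_crossing n E'"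
    and nested: "\<forall>c\<in>E'. u < Min c \<and> Min c < v \<and> v < Max c"
    using n_crossing_leftmost_chord[OF Suc.prems(1)] by blast
  have cd': "chord_diagram E'"
    using \<open>n_crossing n E'\<close> unfolding n_crossing_def by blast
  have "u < t" "t \<le> v"
    using Suc.prems(2) E(3) by (auto simp: E spans_def)
  have points': "y = Min c \<or> y = Max c" if "y \<in> c" "c \<in> E'" for y c
    using chord_diagram_Min_Max(1)[OF cd' that(2)] that(1) by blast
  have "\<forall>y\<in>points E'. u < y" "v \<notin> points E'"
    using nested points' by (fastforce simp: points_def)+
  have "expansion_invariant (step_weight z t) E = expansion_invariant (step_weight z v) E"
    using Suc.prems(2) nested points' \<open>u < t\<close> \<open>t \<le> v\<close>
    by (intro expansion_invariant_cong) (fastforce simp: E spans_def step_weight_def points_def)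
  moreover have "\<forall>c\<in>E'. spans v c"
    using nested by (auto simp: spans_def)
  then have "2 * expansion_invariant (step_weight z v) E =
      (z + 1) * filling_polynomial n (z + 1) + (z - 1) * filling_polynomial n (z - 1)"
    using expansion_invariant_left_chord[OF cd' \<open>\<forall>y\<in>points E'. u < y\<close> E(3) \<open>v \<notin> points E'\<close>]
      Suc.IH[OF \<open>n_crossing n E'\<close>] by (simp add: E)
  ultimately show ?case
    using filling_polynomial_Suc[of n z] by simp
qed

theorem corollary2:
  fixes n :: nat and E :: "nat set set"
  assumes "n \<ge> 1" and "n_crossing n E"
  shows "ex E = card {M \<in> zero_one_fillings n. good_filling n M}"
proof -
  obtain m where "n = Suc m"
    using assms(1) by (cases n) auto
  then obtain u v E' where E: "E = insert {u, v} E'" "u < v"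
    and nested: "\<forall>c\<in>E'. Min c < v \<and> v < Max c"
    using n_crossing_leftmost_chord assms(2) by metis
  then have "\<forall>c\<in>E. spans v c"
    by (auto simp: spans_def)
  have "step_weight 1 v = (\<lambda>_. 0)"
    by (auto simp: step_weight_def)
  moreover have "chord_diagram E"
    using assms(2) unfolding n_crossing_def by blast
  ultimately have "int (ex E) = expansion_invariant (step_weight 1 v) E"
    by (simp add: ex_eq_expansion_invariant)
  also have "\<dots> = filling_polynomial n 1"
    using expansion_invariant_n_crossing[OF assms(2) \<open>\<forall>c\<in>E. spans v c\<close>] .
  also have "\<dots> = int (card (admissible_fillings n))"
    by (simp add: filling_polynomial_def)
  finally show ?thesis
    by (simp add: admissible_fillings_def)
qed

end
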